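(* Let $B$ be a Boolean algebra with more than two elements, regarded as a commutative semiring with $+=\vee$, $\cdot=\wedge$, zero the least element $0$ and unit the greatest element $1$. Let $G=\langle g\mid g^n=1\rangle$ be a finite cyclic group of order $n\ge 2$, and let $BG$ be the group semiring of $G$ over $B$. Then for every $h\in G$ there exist $\alpha,\beta\in BG\setminus G$ such that $\alpha\beta=h$.
   Context: For a commutative semiring $S$ with unit $1$ and a multiplicative group $G$, the group semiring $SG$ is the set of finite formal sums $\sum_i s_i g_i$ ($s_i\in S$, $g_i\in G$), i.e. finitely supported functions $G\to S$, with coefficientwise addition $\sum_i s_ig_i+\sum_i t_ig_i=\sum_i(s_i+t_i)g_i$ and multiplication $\big(\sum_i s_ig_i\big)\big(\sum_j t_jh_j\big)=\sum_{k\in G}\Big(\sum_{g_ih_j=k}s_it_j\Big)k$. The group $G$ is identified with the subset $\{1\cdot g: g\in G\}\subseteq SG$. *)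

theory Defs
  imports Main
begin

text \<open>The cyclic group G = <g | g^n = 1> is represented by exponents {0..<n},
  with g^i * g^j = g^((i+j) mod n).  An element of the group semiring BG
  (B a Boolean algebra, + = sup, * = inf, 0 = bot, 1 = top) is a function
  nat => B that vanishes (is bot) outside {0..<n}; its value at i is the
  coefficient of g^i.\<close>

definition gs_carrier :: "nat \<Rightarrow> (nat \<Rightarrow> 'a::boolean_algebra) set" where
  "gs_carrier n = {f. \<forall>i. n \<le> i \<longrightarrow> f i = bot}"

text \<open>Convolution product: coefficient of g^k is the join over all i<n of
  a_i * b_j with j the unique exponent such that g^i g^j = g^k.\<close>
definition gs_mult :: "nat \<Rightarrow> (nat \<Rightarrow> 'a::boolean_algebra) \<Rightarrow> (nat \<Rightarrow> 'a) \<Rightarrow> nat \<Rightarrow> 'a" where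
  "gs_mult n a b k =
     (if k < n then foldr sup [inf (a i) (b ((k + n - i) mod n)). i \<leftarrow> [0..<n]] bot else bot)"

definition gs_elem :: "nat \<Rightarrow> nat \<Rightarrow> nat \<Rightarrow> 'a::boolean_algebra" where
  "gs_elem n k = (\<lambda>i. if i = k then top else bot)"

definition gs_group :: "nat \<Rightarrow> (nat \<Rightarrow> 'a::boolean_algebra) set" where
  "gs_group n = gs_elem n ` {..<n}"

end

theory Submission
  imports Defs
begin

text \<open>Take a \<in> B with 0 < a < 1, which exists since B has more than two elements.
  Then \<alpha> = a + a'g and \<beta> = (a + a'g^-1)h have a coefficient strictly between 0
  and 1, so they are not group elements, while
  \<alpha>\<beta> = (a \<and> a)h + (a \<and> a')g^-1h + (a' \<and> a)gh + (a' \<and> a')h = (a \<or> a')h = h.\<close>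

lemma proper_element_exists:
  fixes x y z :: "'a::bounded_lattice"
  assumes "x \<noteq> y" "y \<noteq> z" "x \<noteq> z"
  obtains a :: 'a where "a \<noteq> bot" "a \<noteq> top"
proof -
  have "x \<notin> {bot, top} \<or> y \<notin> {bot, top} \<or> z \<notin> {bot, top}"
    using assms by auto
  then show thesis
    using that by auto
qed

lemma foldr_sup_map_eq_bot:
  "(\<And>x. x \<in> set xs \<Longrightarrow> f x = bot) \<Longrightarrow> foldr sup (map f xs) (bot::'a::bounded_lattice) = bot"
  by (induction xs) auto

lemma pred_mod_eq_iff:
  fixes h k n :: nat
  assumes "h < n" "k < n"
  shows "(k + n - 1) mod n = (h + n - 1) mod n \<longleftrightarrow> k = h"
  using assms by (auto simp: mod_if split: if_splits)

lemma pred_mod_neq: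
  fixes h n :: nat
  assumes "2 \<le> n" "h < n"
  shows "(h + n - 1) mod n \<noteq> h"
  using assms by (auto simp: mod_if split: if_splits)

lemma gs_group_coeff_bot_or_top:
  "f \<in> gs_group n \<Longrightarrow> f i = bot \<or> f i = top"
  by (auto simp: gs_group_def gs_elem_def)

lemma gs_mult_two_terms:
  fixes \<alpha> \<beta> :: "nat \<Rightarrow> 'a::boolean_algebra"
  assumes "2 \<le> n" and \<alpha>: "\<And>i. 2 \<le> i \<Longrightarrow> \<alpha> i = bot"
  shows "gs_mult n \<alpha> \<beta> k =
    (if k < n then sup (inf (\<alpha> 0) (\<beta> k)) (inf (\<alpha> 1) (\<beta> ((k + n - 1) mod n))) else bot)"
proof -
  have "[0..<n] = 0 # 1 # [2..<n]"
    using assms(1) by (simp add: upt_conv_Cons numeral_2_eq_2)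
  moreover have "foldr sup (map (\<lambda>i. inf (\<alpha> i) (\<beta> ((k + n - i) mod n))) [2..<n]) bot = bot"
    by (rule foldr_sup_map_eq_bot) (simp add: \<alpha>)
  ultimately show ?thesis
    by (simp add: gs_mult_def)
qed

definition gs_split :: "'a::boolean_algebra \<Rightarrow> nat \<Rightarrow> nat \<Rightarrow> nat \<Rightarrow> 'a" where
  "gs_split a i j = (\<lambda>l. if l = i then a else if l = j then - a else bot)"

lemma gs_split_in_carrier: "i < n \<Longrightarrow> j < n \<Longrightarrow> gs_split a i j \<in> gs_carrier n"
  by (auto simp: gs_carrier_def gs_split_def)

lemma gs_split_notin_group:
  "a \<noteq> bot \<Longrightarrow> a \<noteq> top \<Longrightarrow> gs_split a i j \<notin> gs_group n"
  using gs_group_coeff_bot_or_top[of "gs_split a i j" n i] by (auto simp: gs_split_def)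

lemma gs_mult_split_split:
  fixes a :: "'a::boolean_algebra"
  assumes "2 \<le> n" "h < n"
  shows "gs_mult n (gs_split a 0 1) (gs_split a h ((h + n - 1) mod n)) = gs_elem n h"
proof
  fix k
  define \<beta> where "\<beta> = gs_split a h ((h + n - 1) mod n)"
  have h'_neq: "(h + n - 1) mod n \<noteq> h"
    using pred_mod_neq assms .
  show "gs_mult n (gs_split a 0 1) \<beta> k = gs_elem n h k"
  proof (cases "k < n")
    case True
    have "inf a (\<beta> k) = (if k = h then a else bot)"
      using h'_neq by (simp add: \<beta>_def gs_split_def)
    moreover have "inf (- a) (\<beta> ((k + n - 1) mod n)) = (if k = h then - a else bot)"
      using pred_mod_eq_iff[OF assms(2) True] h'_neq by (simp add: \<beta>_def gs_split_def)
    ultimately show ?thesis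
      using True assms(1) gs_mult_two_terms[of n "gs_split a 0 1" \<beta> k]
      by (simp add: gs_split_def gs_elem_def)
  qed (use assms(2) in \<open>simp add: gs_mult_def gs_elem_def\<close>)
qed

theorem theorem2p5p1:
  fixes n h :: nat
  assumes "n \<ge> 2"
    and "\<exists>x y z :: 'a::boolean_algebra. x \<noteq> y \<and> y \<noteq> z \<and> x \<noteq> z"
    and "h < n"
  shows "\<exists>\<alpha> \<beta> :: nat \<Rightarrow> 'a.
           \<alpha> \<in> gs_carrier n \<and> \<beta> \<in> gs_carrier n \<and>
           \<alpha> \<notin> gs_group n \<and> \<beta> \<notin> gs_group n \<and>
           gs_mult n \<alpha> \<beta> = gs_elem n h"
proof -
  obtain x y z :: 'a where "x \<noteq> y" "y \<noteq> z" "x \<noteq> z"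
    using assms(2) by blast
  then obtain a :: 'a where a: "a \<noteq> bot" "a \<noteq> top"
    by (rule proper_element_exists)
  let ?\<alpha> = "gs_split a 0 1" and ?\<beta> = "gs_split a h ((h + n - 1) mod n)"
  have "?\<alpha> \<in> gs_carrier n" "?\<beta> \<in> gs_carrier n"
    using assms(1,3) by (simp_all add: gs_split_in_carrier)
  moreover have "?\<alpha> \<notin> gs_group n" "?\<beta> \<notin> gs_group n"
    using a by (simp_all add: gs_split_notin_group)
  moreover have "gs_mult n ?\<alpha> ?\<beta> = gs_elem n h"
    using assms(1,3) by (rule gs_mult_split_split)
  ultimately show ?thesis
    by blast
qed

end
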